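(* For every $i\ge2$, the Mycielski graph $G_i$ does not occur as an induced subgraph of the enhanced conflict graph of any traffic pattern in a multicast switch.
   Context: Mycielski graphs: $G_0=K_2$ and $G_{i+1}$ is the Mycielskian of $G_i$ (for a graph $H$ on $v_1,\dots,v_n$, add vertices $w_1,\dots,w_n,z$, join $w_j$ to every neighbor of $v_j$, and join $z$ to all $w_j$). Thus $G_1=C_5$, $G_2$ is the Grötzsch graph, $\omega(G_i)=2$, $\chi(G_i)=i+2$. A flow is $(i,J)$ with input $i$ and nonempty fanout $J$ of outputs; subflows are $(i,J,j)$ with $j\in J$. Enhanced conflict graph: one vertex per subflow; distinct subflows $(i,J,j),(i',J',j')$ adjacent iff $j=j'$, or $i=i'$ and $J\ne J'$. *)

theory Defs
  imports Main
begin

text \<open>A finite simple graph is represented as a pair (n, E): vertex set {0..<n}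
  and a symmetric irreflexive adjacency relation E on it.\<close>

type_synonym sgraph = "nat \<times> (nat \<Rightarrow> nat \<Rightarrow> bool)"

text \<open>Mycielskian of a graph on v_0..v_(n-1): v_j = j, w_j = n + j, z = 2n.\<close>
definition mycielskian :: "sgraph \<Rightarrow> sgraph" where
  "mycielskian G = (let n = fst G; E = snd G in
     (2 * n + 1, \<lambda>u v.
        (u < n \<and> v < n \<and> E u v)
      \<or> (u < n \<and> n \<le> v \<and> v < 2 * n \<and> E u (v - n))
      \<or> (v < n \<and> n \<le> u \<and> u < 2 * n \<and> E (u - n) v)
      \<or> (u = 2 * n \<and> n \<le> v \<and> v < 2 * n)
      \<or> (v = 2 * n \<and> n \<le> u \<and> u < 2 * n)))"

fun mycielski :: "nat \<Rightarrow> sgraph" where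
  "mycielski 0 = (2, \<lambda>u v. (u = 0 \<and> v = 1) \<or> (u = 1 \<and> v = 0))"
| "mycielski (Suc i) = mycielskian (mycielski i)"

text \<open>Flows (i, J): input i, fanout J (nonempty set of outputs).
  A traffic pattern is a finite set of flows.\<close>
type_synonym flow = "nat \<times> nat set"
type_synonym subflow = "nat \<times> nat set \<times> nat"

definition traffic_pattern :: "flow set \<Rightarrow> bool" where
  "traffic_pattern T \<longleftrightarrow> finite T \<and> (\<forall>(i, J) \<in> T. J \<noteq> {} \<and> finite J)"

definition subflows :: "flow set \<Rightarrow> subflow set" where
  "subflows T = {(i, J, j). (i, J) \<in> T \<and> j \<in> J}"

definition ecg_adj :: "subflow \<Rightarrow> subflow \<Rightarrow> bool" where
  "ecg_adj s s' \<longleftrightarrow> s \<noteq> s' \<and>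
     (snd (snd s) = snd (snd s') \<or> (fst s = fst s' \<and> fst (snd s) \<noteq> fst (snd s')))"

definition occurs_induced :: "sgraph \<Rightarrow> 'v set \<Rightarrow> ('v \<Rightarrow> 'v \<Rightarrow> bool) \<Rightarrow> bool" where
  "occurs_induced G V A \<longleftrightarrow> (\<exists>f. inj_on f {..<fst G} \<and> f ` {..<fst G} \<subseteq> V \<and>
     (\<forall>u < fst G. \<forall>v < fst G. snd G u v \<longleftrightarrow> A (f u) (f v)))"

end

theory Submission
  imports Defs
begin

abbreviation sf_input :: "subflow \<Rightarrow> nat" where "sf_input s \<equiv> fst s"
abbreviation sf_fanout :: "subflow \<Rightarrow> nat set" where "sf_fanout s \<equiv> fst (snd s)"
abbreviation sf_output :: "subflow \<Rightarrow> nat" where "sf_output s \<equiv> snd (snd s)"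

lemma ecg_adj_same_output: "s \<noteq> t \<Longrightarrow> sf_output s = sf_output t \<Longrightarrow> ecg_adj s t"
  by (simp add: ecg_adj_def)

lemma ecg_independent_neighbours_same_flow:
  assumes "ecg_adj s t" "ecg_adj s t'" "t \<noteq> t'" "\<not> ecg_adj t t'"
    and "sf_output t \<noteq> sf_output s" "sf_output t' \<noteq> sf_output s"
  shows "sf_input t = sf_input t' \<and> sf_fanout t = sf_fanout t'"
  using assms by (auto simp add: ecg_adj_def)

lemma ecg_private_neighbours_adj:
  assumes "sf_input t = sf_input t'" "sf_fanout t = sf_fanout t'"
    and "ecg_adj t a" "\<not> ecg_adj t' a" "ecg_adj t b" "\<not> ecg_adj t' b" "a \<noteq> b"
  shows "ecg_adj a b"
proof -
  have shares_output: "sf_output c = sf_output t" if "ecg_adj t c" "\<not> ecg_adj t' c" for c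
    using that assms(1,2) by (auto simp add: ecg_adj_def)
  show ?thesis
    using shares_output[OF assms(3,4)] shares_output[OF assms(5,6)] assms(7)
    by (simp add: ecg_adj_def)
qed

lemma grotzsch_not_induced_ecg: "\<not> occurs_induced (mycielski 2) V ecg_adj"
proof
  let ?E = "snd (mycielski 2)"
  assume "occurs_induced (mycielski 2) V ecg_adj"
  moreover have "fst (mycielski 2) = 11"
    by (simp add: mycielskian_def Let_def numeral_eq_Suc)
  ultimately obtain f where inj: "inj_on f {..<11}"
    and adj_iff: "\<And>u v. u < 11 \<Longrightarrow> v < 11 \<Longrightarrow> ecg_adj (f u) (f v) \<longleftrightarrow> ?E u v"
    unfolding occurs_induced_def by auto
  have "?E 10 5" "?E 10 6" "?E 10 7" "?E 10 9"
    "?E 5 1" "?E 5 3" "\<not> ?E 6 1" "\<not> ?E 6 3" "\<not> ?E 1 3"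
    "?E 7 1" "?E 7 4" "\<not> ?E 9 1" "\<not> ?E 9 4" "\<not> ?E 1 4"
    "\<not> ?E 5 6" "\<not> ?E 5 7" "\<not> ?E 5 9" "\<not> ?E 6 7" "\<not> ?E 6 9" "\<not> ?E 7 9"
    by (simp_all add: mycielskian_def Let_def numeral_eq_Suc)
  then have adj: "ecg_adj (f 10) (f 5)" "ecg_adj (f 10) (f 6)" "ecg_adj (f 10) (f 7)"
      "ecg_adj (f 10) (f 9)" "ecg_adj (f 5) (f 1)" "ecg_adj (f 5) (f 3)"
      "ecg_adj (f 7) (f 1)" "ecg_adj (f 7) (f 4)"
    and non_adj: "\<not> ecg_adj (f 6) (f 1)" "\<not> ecg_adj (f 6) (f 3)" "\<not> ecg_adj (f 1) (f 3)"
      "\<not> ecg_adj (f 9) (f 1)" "\<not> ecg_adj (f 9) (f 4)" "\<not> ecg_adj (f 1) (f 4)"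
    and independent: "\<not> ecg_adj (f 5) (f 6)" "\<not> ecg_adj (f 5) (f 7)" "\<not> ecg_adj (f 5) (f 9)"
      "\<not> ecg_adj (f 6) (f 7)" "\<not> ecg_adj (f 6) (f 9)" "\<not> ecg_adj (f 7) (f 9)"
    by (simp_all add: adj_iff)
  have distinct: "f u \<noteq> f v" if "u < 11" "v < 11" "u \<noteq> v" for u v
    using inj that by (auto dest: inj_onD)
  have "sf_input (f 5) \<noteq> sf_input (f 6) \<or> sf_fanout (f 5) \<noteq> sf_fanout (f 6)"
    using ecg_private_neighbours_adj[of "f 5" "f 6" "f 1" "f 3"] adj non_adj distinct[of 1 3]
    by auto
  moreover have "sf_input (f 7) \<noteq> sf_input (f 9) \<or> sf_fanout (f 7) \<noteq> sf_fanout (f 9)"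
    using ecg_private_neighbours_adj[of "f 7" "f 9" "f 1" "f 4"] adj non_adj distinct[of 1 4]
    by auto
  moreover have "sf_output (f 5) \<noteq> sf_output (f 7)" "sf_output (f 5) \<noteq> sf_output (f 9)"
    "sf_output (f 6) \<noteq> sf_output (f 7)" "sf_output (f 6) \<noteq> sf_output (f 9)"
    using independent ecg_adj_same_output[of "f 5" "f 7"] ecg_adj_same_output[of "f 5" "f 9"]
      ecg_adj_same_output[of "f 6" "f 7"] ecg_adj_same_output[of "f 6" "f 9"]
      distinct[of 5 7] distinct[of 5 9] distinct[of 6 7] distinct[of 6 9] by auto
  ultimately show False
    using ecg_independent_neighbours_same_flow[of "f 10" "f 5" "f 6"]
      ecg_independent_neighbours_same_flow[of "f 10" "f 7" "f 9"]
      adj independent distinct[of 5 6] distinct[of 7 9] by metis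
qed

definition induced_prefix :: "sgraph \<Rightarrow> sgraph \<Rightarrow> bool" where
  "induced_prefix G H \<longleftrightarrow> fst G \<le> fst H \<and> (\<forall>u < fst G. \<forall>v < fst G. snd H u v = snd G u v)"

lemma induced_prefix_refl: "induced_prefix G G"
  by (simp add: induced_prefix_def)

lemma induced_prefix_trans: "induced_prefix G H \<Longrightarrow> induced_prefix H K \<Longrightarrow> induced_prefix G K"
  unfolding induced_prefix_def by (metis order_less_le_trans order_trans)

lemma induced_prefix_mycielskian: "induced_prefix G (mycielskian G)"
  unfolding induced_prefix_def mycielskian_def Let_def by simp

lemma induced_prefix_mycielski: "j \<le> i \<Longrightarrow> induced_prefix (mycielski j) (mycielski i)"
proof (induction i rule: dec_induct)
  case base
  show ?case by (rule induced_prefix_refl)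
next
  case (step i)
  show ?case
    using induced_prefix_trans[OF step.IH induced_prefix_mycielskian] by simp
qed

lemma occurs_induced_prefix:
  assumes "induced_prefix G H" "occurs_induced H V A"
  shows "occurs_induced G V A"
proof -
  obtain f where f: "inj_on f {..<fst H}" "f ` {..<fst H} \<subseteq> V"
    "\<forall>u < fst H. \<forall>v < fst H. snd H u v \<longleftrightarrow> A (f u) (f v)"
    using assms(2) unfolding occurs_induced_def by blast
  have size: "fst G \<le> fst H" and same_edges: "\<forall>u < fst G. \<forall>v < fst G. snd H u v = snd G u v"
    using assms(1) unfolding induced_prefix_def by simp_all
  then have "{..<fst G} \<subseteq> {..<fst H}"
    by simp
  then have "inj_on f {..<fst G}" "f ` {..<fst G} \<subseteq> V"
    using f(1,2) by (auto intro: inj_on_subset)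
  moreover have "snd G u v \<longleftrightarrow> A (f u) (f v)" if "u < fst G" "v < fst G" for u v
    using f(3) same_edges that size by (metis order_less_le_trans)
  ultimately show ?thesis
    unfolding occurs_induced_def by blast
qed

theorem corollary2:
  fixes i :: nat and T :: "flow set"
  assumes "2 \<le> i" and "traffic_pattern T"
  shows "\<not> occurs_induced (mycielski i) (subflows T) ecg_adj"
  using occurs_induced_prefix[OF induced_prefix_mycielski[OF assms(1)]] grotzsch_not_induced_ecg
  by blast

end
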